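(* For all $k,l\in\{1,\dots,[n/2]\}$ one has $\{J_k,J_l\}=0$, $\{F_k,F_l\}=0$ and $\{F_k,H\}=0$. Moreover, when $n$ is odd, the function $C=\dfrac{x_1x_3\cdots x_n}{x_2x_4\cdots x_{n-1}}$ is a Casimir function of the bracket $\{\cdot,\cdot\}$, i.e. $\{C,x_j\}=0$ for all $j=1,\dots,n$.
   Context: Let $n\ge1$, $(a_1,\dots,a_n)\in\mathbb R^n\setminus\{0\}$. On $\mathbb R^n$ with coordinates $x_1,\dots,x_n$ consider the Poisson bracket $\{x_i,x_j\}=x_ix_j$ for $1\le i<j\le n$ (extended by skew-symmetry and the Leibniz rule; rational functions are considered on the open dense set where their denominators do not vanish). Let $H=a_1x_1+\dots+a_nx_n$, $v_0:=0$ and $v_i:=a_1x_1+\dots+a_ix_i$ for $i=1,\dots,n$ (so $v_n=H$). For $k=1,\dots,[n/2]$ let $J_k:=\dfrac{x_1x_3\cdots x_{2k-1}}{x_2x_4\cdots x_{2k}}$. For $k=1,\dots,[(n+1)/2]$ let $F_k:=v_{2k-1}\dfrac{x_{2k+1}x_{2k+3}\cdots x_n}{x_{2k}x_{2k+2}\cdots x_{n-1}}$ if $n$ is odd, and $F_k:=v_{2k}\dfrac{x_{2k+2}x_{2k+4}\cdots x_n}{x_{2k+1}x_{2k+3}\cdots x_{n-1}}$ if $n$ is even (empty products equal $1$, so $F_{[(n+1)/2]}=H$). *)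

theory Defs
  imports "HOL-Analysis.Analysis"
begin

text \<open>Points of R^n are represented as functions x :: nat => real, coordinates x 1, ..., x n.
  Functions on R^n are maps (nat => real) => real that only depend on coordinates 1..n.\<close>

definition pd :: "((nat \<Rightarrow> real) \<Rightarrow> real) \<Rightarrow> nat \<Rightarrow> (nat \<Rightarrow> real) \<Rightarrow> real" where
  "pd f i x = deriv (\<lambda>t. f (x(i := t))) (x i)"

definition pimat :: "nat \<Rightarrow> nat \<Rightarrow> (nat \<Rightarrow> real) \<Rightarrow> real" where
  "pimat i j x = (if i < j then x i * x j else if j < i then - (x i * x j) else 0)"

definition pbracket :: "nat \<Rightarrow> ((nat \<Rightarrow> real) \<Rightarrow> real) \<Rightarrow> ((nat \<Rightarrow> real) \<Rightarrow> real) \<Rightarrow> (nat \<Rightarrow> real) \<Rightarrow> real" where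
  "pbracket n f g x = (\<Sum>i\<in>{1..n}. \<Sum>j\<in>{1..n}. pimat i j x * pd f i x * pd g j x)"

definition vfun :: "(nat \<Rightarrow> real) \<Rightarrow> nat \<Rightarrow> (nat \<Rightarrow> real) \<Rightarrow> real" where
  "vfun a i x = (\<Sum>j\<in>{1..i}. a j * x j)"

definition Hfun :: "nat \<Rightarrow> (nat \<Rightarrow> real) \<Rightarrow> (nat \<Rightarrow> real) \<Rightarrow> real" where
  "Hfun n a = vfun a n"

definition Jfun :: "nat \<Rightarrow> (nat \<Rightarrow> real) \<Rightarrow> real" where
  "Jfun k x = (\<Prod>m\<in>{1..k}. x (2*m - 1)) / (\<Prod>m\<in>{1..k}. x (2*m))"

definition Ffun :: "nat \<Rightarrow> (nat \<Rightarrow> real) \<Rightarrow> nat \<Rightarrow> (nat \<Rightarrow> real) \<Rightarrow> real" where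
  "Ffun n a k x =
     (if odd n then
        vfun a (2*k - 1) x * (\<Prod>m\<in>{k+1..(n+1) div 2}. x (2*m - 1)) / (\<Prod>m\<in>{k..(n-1) div 2}. x (2*m))
      else
        vfun a (2*k) x * (\<Prod>m\<in>{k+1..n div 2}. x (2*m)) / (\<Prod>m\<in>{k+1..n div 2}. x (2*m - 1)))"

definition Cfun :: "nat \<Rightarrow> (nat \<Rightarrow> real) \<Rightarrow> real" where
  "Cfun n x = (\<Prod>m\<in>{1..(n+1) div 2}. x (2*m - 1)) / (\<Prod>m\<in>{1..(n-1) div 2}. x (2*m))"

end

theory Submission
  imports Defs
begin

text \<open>In logarithmic coordinates the bracket has the constant structure matrix sgn(j - i), so
  {f, g} = \<Sum> sgn(j - i) (x_i d_i f) (x_j d_j g), and Abel summation turns this into the skew form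
  \<Sum>_m (A(m-1) B(m) - A(m) B(m-1)) of the partial sums A, B of the two logarithmic gradients.
  J_k, C and F_k are (v_p times) Laurent monomials in alternating variables, and the partial sums
  of their logarithmic gradients, and of that of H, follow a sequence U up to some index p and then
  alternate U(p), 0, U(p), ...; for two such profiles with p = q (mod 2) the terms of the skew form
  cancel in consecutive pairs. For the Casimir, pairing the profile [m odd] with a coordinate x_j
  gives A(j-1) + A(j) - A(n) = 1 - 1.\<close>

definition psum :: "(nat \<Rightarrow> real) \<Rightarrow> nat \<Rightarrow> real" where
  "psum v m = (\<Sum>i = 1..m. v i)"

lemma psum_0 [simp]: "psum v 0 = 0"
  by (simp add: psum_def)

lemma psum_Suc [simp]: "psum v (Suc m) = psum v m + v (Suc m)"
  by (simp add: psum_def atLeastAtMostSuc_conv add.commute)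

definition skew_form :: "nat \<Rightarrow> (nat \<Rightarrow> real) \<Rightarrow> (nat \<Rightarrow> real) \<Rightarrow> real" where
  "skew_form N A B = (\<Sum>m = 1..N. A (m - 1) * B m - A m * B (m - 1))"

lemma skew_form_0 [simp]: "skew_form 0 A B = 0"
  by (simp add: skew_form_def)

lemma skew_form_Suc [simp]:
  "skew_form (Suc N) A B = skew_form N A B + (A N * B (Suc N) - A (Suc N) * B N)"
  by (simp add: skew_form_def atLeastAtMostSuc_conv add.commute)

lemma skew_form_swap: "skew_form N B A = - skew_form N A B"
  by (induction N) simp_all

lemma skew_form_cong:
  "(\<And>m. m \<le> N \<Longrightarrow> A m = A' m) \<Longrightarrow> (\<And>m. m \<le> N \<Longrightarrow> B m = B' m) \<Longrightarrow> skew_form N A B = skew_form N A' B'"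
  unfolding skew_form_def by (intro sum.cong) auto

lemma sum_sgn_eq_skew_form:
  "(\<Sum>i = 1..N. \<Sum>j = 1..N. sgn (real j - real i) * v i * w j) = skew_form N (psum v) (psum w)"
proof (induction N)
  case (Suc N)
  have new_row: "(\<Sum>j = 1..N. sgn (real j - real (Suc N)) * v (Suc N) * w j) = - v (Suc N) * psum w N"
    unfolding psum_def sum_distrib_left by (auto intro!: sum.cong)
  have new_column: "(\<Sum>i = 1..N. sgn (real (Suc N) - real i) * v i * w (Suc N)) = psum v N * w (Suc N)"
    unfolding psum_def sum_distrib_right by (auto intro!: sum.cong)
  have "(\<Sum>i = 1..Suc N. \<Sum>j = 1..Suc N. sgn (real j - real i) * v i * w j)
      = (\<Sum>i = 1..N. \<Sum>j = 1..N. sgn (real j - real i) * v i * w j)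
        + (\<Sum>j = 1..N. sgn (real j - real (Suc N)) * v (Suc N) * w j)
        + (\<Sum>i = 1..N. sgn (real (Suc N) - real i) * v i * w (Suc N))"
    by (simp add: atLeastAtMostSuc_conv sum.distrib)
  then show ?case
    unfolding new_row new_column Suc.IH by (simp add: algebra_simps)
qed simp

lemma skew_form_step:
  assumes "1 \<le> j"
  shows "skew_form N A (\<lambda>m. c * of_bool (j \<le> m)) = (if j \<le> N then c * (A (j - 1) + A j - A N) else 0)"
proof (induction N)
  case (Suc N)
  consider "j \<le> N" | "j = Suc N" | "Suc N < j" by linarith
  then show ?case
    using Suc.IH assms by cases (auto simp: algebra_simps)
qed (use assms in simp)

definition alt_tail :: "(nat \<Rightarrow> real) \<Rightarrow> nat \<Rightarrow> nat \<Rightarrow> real" where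
  "alt_tail U p m = (if m \<le> p then U m else if even (m - p) then U p else 0)"

lemma skew_form_alt_tail_closed:
  assumes "p \<le> q" "even (q - p)"
  shows "skew_form N (alt_tail U p) (alt_tail U q) = (if p < N \<and> N \<le> q \<and> odd (N - p) then U p * U N else 0)"
proof (induction N)
  case (Suc N)
  consider "Suc N \<le> p" | "p \<le> N" "N < q" | "q \<le> N" by linarith
  then show ?case
  proof cases
    case 1
    then show ?thesis using Suc.IH assms by (simp add: alt_tail_def)
  next
    case 2
    then have "Suc N - p = Suc (N - p)" by simp
    then show ?thesis using 2 Suc.IH by (cases "even (N - p)") (auto simp: alt_tail_def algebra_simps)
  next
    case 3
    then have "even (N - p) \<longleftrightarrow> even (N - q)" "even (Suc N - p) \<longleftrightarrow> even (Suc N - q)"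
        "even (Suc N - q) \<longleftrightarrow> odd (N - q)"
      using assms by presburger+
    then show ?thesis using 3 Suc.IH assms by (auto simp: alt_tail_def)
  qed
qed simp

lemma skew_form_alt_tail_eq_0:
  assumes "p \<le> N" "q \<le> N" "even (p + q)"
  shows "skew_form N (alt_tail U p) (alt_tail U q) = 0"
proof -
  have ordered: "skew_form N (alt_tail U p) (alt_tail U q) = 0" if "p \<le> q" "q \<le> N" "even (p + q)" for p q
    using skew_form_alt_tail_closed[of p q N U] that by auto
  show ?thesis
  proof (cases "p \<le> q")
    case False
    then show ?thesis
      using ordered[of q p] assms skew_form_swap[of N "alt_tail U q" "alt_tail U p"] by (simp add: add.commute)
  qed (use ordered assms in auto)
qed

lemma pd_eqI: "((\<lambda>t. f (x(i := t))) has_real_derivative D) (at (x i)) \<Longrightarrow> pd f i x = D"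
  unfolding pd_def by (rule DERIV_imp_deriv)

lemma prod_fun_upd:
  assumes "finite P" "i \<in> P"
  shows "prod (x(i := t)) P = t * prod x (P - {i})"
proof -
  have "prod (x(i := t)) (P - {i}) = prod x (P - {i})"
    by (intro prod.cong) auto
  then show ?thesis
    using prod.remove[OF assms, of "x(i := t)"] by simp
qed

lemma prod_fun_upd_has_real_derivative:
  assumes "finite P"
  shows "((\<lambda>t. prod (x(i := t)) P) has_real_derivative (if i \<in> P then prod x (P - {i}) else 0)) (at s)"
proof (cases "i \<in> P")
  case True
  have "(\<lambda>t. prod (x(i := t)) P) = (\<lambda>t. t * prod x (P - {i}))"
    using prod_fun_upd[OF assms True] by (rule ext)
  then show ?thesis
    using True by (auto intro!: derivative_eq_intros)
next
  case False
  then have "prod (x(i := t)) P = prod x P" for t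
    by (intro prod.cong) auto
  then show ?thesis using False by simp
qed

text \<open>The division by x i is harmless: x i = 0 forces i \<notin> P \<union> Q, and then the derivative is 0.\<close>

lemma laurent_has_real_derivative:
  assumes "finite P" "finite Q" "P \<inter> Q = {}" "\<forall>j\<in>P \<union> Q. x j \<noteq> 0"
  shows "((\<lambda>t. prod (x(i := t)) P / prod (x(i := t)) Q) has_real_derivative
           prod x P / prod x Q * (of_bool (i \<in> P) - of_bool (i \<in> Q)) / x i) (at (x i))"
proof -
  have Q: "prod x Q \<noteq> 0" using assms(2,4) by auto
  have "((\<lambda>t. prod (x(i := t)) P / prod (x(i := t)) Q) has_real_derivative
      ((if i \<in> P then prod x (P - {i}) else 0) * prod x Q - prod x P * (if i \<in> Q then prod x (Q - {i}) else 0))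
      / (prod x Q * prod x Q)) (at (x i))"
    using DERIV_divide[OF prod_fun_upd_has_real_derivative[OF assms(1), of x i "x i"]
        prod_fun_upd_has_real_derivative[OF assms(2), of x i "x i"]] Q
    by (simp only: fun_upd_triv simp_thms)
  moreover have "((if i \<in> P then prod x (P - {i}) else 0) * prod x Q - prod x P * (if i \<in> Q then prod x (Q - {i}) else 0))
      / (prod x Q * prod x Q) = prod x P / prod x Q * (of_bool (i \<in> P) - of_bool (i \<in> Q)) / x i"
    using assms prod_fun_upd[OF assms(1), of i x "x i"] prod_fun_upd[OF assms(2), of i x "x i"] Q
    by (auto simp: field_simps)
  ultimately show ?thesis by simp
qed

lemma log_pd_laurent:
  assumes "finite P" "finite Q" "P \<inter> Q = {}" "\<forall>j\<in>P \<union> Q. x j \<noteq> 0"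
  shows "x i * pd (\<lambda>y. prod y P / prod y Q) i x = prod x P / prod x Q * (of_bool (i \<in> P) - of_bool (i \<in> Q))"
  using pd_eqI[OF laurent_has_real_derivative[OF assms, of i]] assms(3,4) by auto

lemma vfun_fun_upd: "vfun a p (x(i := t)) = vfun a p x + of_bool (i \<in> {1..p}) * a i * (t - x i)"
proof (cases "1 \<le> i \<and> i \<le> p")
  case True
  then have "vfun a p y = a i * y i + (\<Sum>j\<in>{1..p} - {i}. a j * y j)" for y
    unfolding vfun_def by (simp add: sum.remove)
  moreover have "(\<Sum>j\<in>{1..p} - {i}. a j * (x(i := t)) j) = (\<Sum>j\<in>{1..p} - {i}. a j * x j)"
    by (intro sum.cong) auto
  ultimately show ?thesis using True by (simp add: algebra_simps)
next
  case False
  then show ?thesis unfolding vfun_def by (auto intro!: sum.cong)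
qed

lemma vfun_fun_upd_has_real_derivative:
  "((\<lambda>t. vfun a p (x(i := t))) has_real_derivative of_bool (i \<in> {1..p}) * a i) (at s)"
  unfolding vfun_fun_upd by (auto intro!: derivative_eq_intros)

lemma log_pd_vfun_mult:
  assumes "((\<lambda>t. f (x(i := t))) has_real_derivative D / x i) (at (x i))" "x i = 0 \<Longrightarrow> D = 0"
  shows "x i * pd (\<lambda>y. vfun a p y * f y) i x = f x * (of_bool (i \<in> {1..p}) * a i * x i) + vfun a p x * D"
proof -
  have "((\<lambda>t. vfun a p (x(i := t)) * f (x(i := t))) has_real_derivative
      of_bool (i \<in> {1..p}) * a i * f x + D / x i * vfun a p x) (at (x i))"
    using DERIV_mult[OF vfun_fun_upd_has_real_derivative[of a p x i "x i"] assms(1)]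
    by (simp only: fun_upd_triv)
  from pd_eqI[OF this] show ?thesis
    using assms(2) by (cases "x i = 0") (auto simp: field_simps)
qed

lemma pd_coordinate: "pd (\<lambda>y. y j) i x = of_bool (i = j)"
  by (rule pd_eqI) (cases "i = j", auto intro!: derivative_eq_intros)

lemma vfun_eq_psum: "vfun a m x = psum (\<lambda>i. a i * x i) m"
  by (simp add: vfun_def psum_def)

lemma psum_truncate: "psum (\<lambda>i. of_bool (i \<in> {1..p}) * u i) m = psum u (min m p)"
proof (induction m)
  case (Suc m)
  consider "m < p" | "m = p" | "p < m" by linarith
  then show ?case using Suc.IH by cases auto
qed simp

lemma pbracket_eq_skew_form:
  assumes "\<forall>i\<in>{1..n}. x i * pd f i x = c * v i" "\<forall>i\<in>{1..n}. x i * pd g i x = d * w i"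
  shows "pbracket n f g x = c * d * skew_form n (psum v) (psum w)"
proof -
  have "pbracket n f g x = (\<Sum>i = 1..n. \<Sum>j = 1..n. sgn (real j - real i) * (x i * pd f i x) * (x j * pd g j x))"
    unfolding pbracket_def by (intro sum.cong refl) (simp add: pimat_def)
  also have "\<dots> = (\<Sum>i = 1..n. \<Sum>j = 1..n. c * d * (sgn (real j - real i) * v i * w j))"
    using assms by (intro sum.cong refl) simp
  also have "\<dots> = c * d * skew_form n (psum v) (psum w)"
    by (simp only: sum_distrib_left[symmetric] sum_sgn_eq_skew_form)
  finally show ?thesis .
qed

definition alt_log_gradient ::
    "nat \<Rightarrow> ((nat \<Rightarrow> real) \<Rightarrow> real) \<Rightarrow> (nat \<Rightarrow> real) \<Rightarrow> (nat \<Rightarrow> real) \<Rightarrow> nat \<Rightarrow> bool" where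
  "alt_log_gradient n f x U p \<longleftrightarrow> p \<le> n \<and>
     (\<exists>c v. (\<forall>i\<in>{1..n}. x i * pd f i x = c * v i) \<and> (\<forall>m\<le>n. psum v m = alt_tail U p m))"

lemma alt_log_gradientI:
  assumes "p \<le> n" "\<And>i. i \<in> {1..n} \<Longrightarrow> x i * pd f i x = c * v i" "\<And>m. m \<le> n \<Longrightarrow> psum v m = alt_tail U p m"
  shows "alt_log_gradient n f x U p"
  unfolding alt_log_gradient_def using assms by blast

lemma pbracket_eq_0_if_alt_log_gradient:
  assumes "alt_log_gradient n f x U p" "alt_log_gradient n g x U q" "even (p + q)"
  shows "pbracket n f g x = 0"
proof -
  obtain c v d w where f: "\<forall>i\<in>{1..n}. x i * pd f i x = c * v i" "\<forall>m\<le>n. psum v m = alt_tail U p m"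
    and g: "\<forall>i\<in>{1..n}. x i * pd g i x = d * w i" "\<forall>m\<le>n. psum w m = alt_tail U q m"
    using assms(1,2) unfolding alt_log_gradient_def by blast
  have "skew_form n (psum v) (psum w) = skew_form n (alt_tail U p) (alt_tail U q)"
    using f(2) g(2) by (intro skew_form_cong) auto
  also have "\<dots> = 0"
    using assms unfolding alt_log_gradient_def by (intro skew_form_alt_tail_eq_0) auto
  finally show ?thesis
    using pbracket_eq_skew_form[OF f(1) g(1)] by simp
qed

definition alt_set :: "nat \<Rightarrow> nat \<Rightarrow> nat set" where
  "alt_set lo hi = {i \<in> {lo..hi}. even (i - lo)}"

lemma mem_alt_set: "i \<in> alt_set lo hi \<longleftrightarrow> lo \<le> i \<and> i \<le> hi \<and> even (i - lo)"
  by (auto simp: alt_set_def)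

lemma prod_odd_indices:
  assumes "1 \<le> a"
  shows "(\<Prod>m\<in>{a..(h + 1) div 2}. y (2 * m - 1)) = prod y (alt_set (2 * a - 1) h)"
proof -
  have "(\<lambda>m. 2 * m - 1) ` {a..(h + 1) div 2} = alt_set (2 * a - 1) h"
  proof (intro equalityI subsetI)
    fix i assume "i \<in> alt_set (2 * a - 1) h"
    then have "(i + 1) div 2 \<in> {a..(h + 1) div 2}" "i = 2 * ((i + 1) div 2) - 1"
      using assms unfolding alt_set_def by auto presburger
    then show "i \<in> (\<lambda>m. 2 * m - 1) ` {a..(h + 1) div 2}" by blast
  qed (use assms in \<open>auto simp: alt_set_def\<close>)
  moreover have "inj_on (\<lambda>m::nat. 2 * m - 1) {a..(h + 1) div 2}"
    using assms by (auto simp: inj_on_def)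
  ultimately show ?thesis
    using prod.reindex[of "\<lambda>m::nat. 2 * m - 1" "{a..(h + 1) div 2}" y] by (simp add: comp_def)
qed

lemma prod_even_indices: "(\<Prod>m\<in>{a..h div 2}. y (2 * m)) = prod y (alt_set (2 * a) h)"
proof -
  have "(\<lambda>m. 2 * m) ` {a..h div 2} = alt_set (2 * a) h"
  proof (intro equalityI subsetI)
    fix i assume "i \<in> alt_set (2 * a) h"
    then have "i div 2 \<in> {a..h div 2}" "i = 2 * (i div 2)"
      unfolding alt_set_def by auto
    then show "i \<in> (\<lambda>m. 2 * m) ` {a..h div 2}" by blast
  qed (auto simp: alt_set_def)
  moreover have "inj_on (\<lambda>m::nat. 2 * m) {a..h div 2}"
    by (auto simp: inj_on_def)
  ultimately show ?thesis
    using prod.reindex[of "\<lambda>m::nat. 2 * m" "{a..h div 2}" y] by (simp add: comp_def)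
qed

definition alt_sign :: "nat \<Rightarrow> nat \<Rightarrow> nat \<Rightarrow> real" where
  "alt_sign lo hi i = of_bool (i \<in> alt_set lo hi) - of_bool (i \<in> alt_set (Suc lo) hi)"

lemma psum_alt_sign:
  assumes "1 \<le> lo"
  shows "psum (alt_sign lo hi) m = of_bool (lo \<le> min m hi \<and> even (min m hi - lo))"
proof (induction m)
  case (Suc m)
  show ?case
  proof (cases "Suc m \<le> hi")
    case True
    then have "min (Suc m) hi = Suc m" "min m hi = m" by simp_all
    with True show ?thesis using Suc.IH by (auto simp: alt_sign_def mem_alt_set)
  next
    case False
    then have "min (Suc m) hi = min m hi" by simp
    with False show ?thesis using Suc.IH by (simp add: alt_sign_def mem_alt_set)
  qed
qed (use assms in simp)

lemma laurent_alt_set_conditions: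
  assumes "\<forall>j\<in>{lo..hi}. x j \<noteq> 0"
  shows "finite (alt_set lo hi)" "finite (alt_set (Suc lo) hi)" "alt_set lo hi \<inter> alt_set (Suc lo) hi = {}"
    "\<forall>j\<in>alt_set lo hi \<union> alt_set (Suc lo) hi. x j \<noteq> 0"
  using assms by (auto simp: alt_set_def)

lemma Jfun_eq_alt_ratio: "Jfun k = (\<lambda>y. prod y (alt_set 1 (2 * k)) / prod y (alt_set 2 (2 * k)))"
proof
  fix y :: "nat \<Rightarrow> real"
  have "(\<Prod>m\<in>{1..k}. y (2 * m - 1)) = prod y (alt_set 1 (2 * k))"
    using prod_odd_indices[where a = 1 and h = "2 * k" and y = y] by simp
  moreover have "(\<Prod>m\<in>{1..k}. y (2 * m)) = prod y (alt_set 2 (2 * k))"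
    using prod_even_indices[where a = 1 and h = "2 * k" and y = y] by simp
  ultimately show "Jfun k y = prod y (alt_set 1 (2 * k)) / prod y (alt_set 2 (2 * k))"
    by (simp add: Jfun_def)
qed

lemma Cfun_eq_alt_ratio:
  assumes "odd n"
  shows "Cfun n = (\<lambda>y. prod y (alt_set 1 n) / prod y (alt_set 2 n))"
proof
  fix y :: "nat \<Rightarrow> real"
  have "(n - 1) div 2 = n div 2" using assms by presburger
  then have "(\<Prod>m\<in>{1..(n - 1) div 2}. y (2 * m)) = prod y (alt_set 2 n)"
    using prod_even_indices[where a = 1 and h = n and y = y] by simp
  moreover have "(\<Prod>m\<in>{1..(n + 1) div 2}. y (2 * m - 1)) = prod y (alt_set 1 n)"
    using prod_odd_indices[where a = 1 and h = n and y = y] by simp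
  ultimately show "Cfun n y = prod y (alt_set 1 n) / prod y (alt_set 2 n)"
    by (simp add: Cfun_def)
qed

lemma Ffun_eq_vfun_mult_alt_ratio:
  assumes "1 \<le> k" "p = (if odd n then 2 * k - 1 else 2 * k)"
  shows "Ffun n a k = (\<lambda>y. vfun a p y * (prod y (alt_set (p + 2) n) / prod y (alt_set (p + 1) n)))"
proof
  fix y :: "nat \<Rightarrow> real"
  show "Ffun n a k y = vfun a p y * (prod y (alt_set (p + 2) n) / prod y (alt_set (p + 1) n))"
  proof (cases "odd n")
    case True
    then have "(n - 1) div 2 = n div 2" by presburger
    then have "(\<Prod>m\<in>{k..(n - 1) div 2}. y (2 * m)) = prod y (alt_set (p + 1) n)"
      using True assms prod_even_indices[where a = k and h = n and y = y] by simp
    moreover have "(\<Prod>m\<in>{k + 1..(n + 1) div 2}. y (2 * m - 1)) = prod y (alt_set (p + 2) n)"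
      using True assms prod_odd_indices[where a = "k + 1" and h = n and y = y] by simp
    ultimately show ?thesis using True assms(2) by (simp add: Ffun_def)
  next
    case False
    then have "(n + 1) div 2 = n div 2" by presburger
    then have "(\<Prod>m\<in>{k + 1..n div 2}. y (2 * m - 1)) = prod y (alt_set (p + 1) n)"
      using False assms prod_odd_indices[where a = "k + 1" and h = n and y = y] by simp
    moreover have "(\<Prod>m\<in>{k + 1..n div 2}. y (2 * m)) = prod y (alt_set (p + 2) n)"
      using False assms prod_even_indices[where a = "k + 1" and h = n and y = y] by simp
    ultimately show ?thesis using False assms(2) by (simp add: Ffun_def)
  qed
qed

lemma log_pd_alt_ratio:
  assumes "\<forall>j\<in>{lo..hi}. x j \<noteq> 0"
  shows "x i * pd (\<lambda>y. prod y (alt_set lo hi) / prod y (alt_set (Suc lo) hi)) i x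
       = prod x (alt_set lo hi) / prod x (alt_set (Suc lo) hi) * alt_sign lo hi i"
  unfolding alt_sign_def by (rule log_pd_laurent[OF laurent_alt_set_conditions[OF assms]])

lemma alt_log_gradient_Jfun:
  assumes "2 * k \<le> n" "\<forall>i\<in>{1..n}. x i \<noteq> 0"
  shows "alt_log_gradient n (Jfun k) x (\<lambda>m. of_bool (odd m)) (2 * k)"
proof (rule alt_log_gradientI)
  show "x i * pd (Jfun k) i x = Jfun k x * alt_sign 1 (2 * k) i" for i
    using log_pd_alt_ratio[of 1 "2 * k" x i] assms unfolding Jfun_eq_alt_ratio
    by (simp add: numeral_2_eq_2)
  show "psum (alt_sign 1 (2 * k)) m = alt_tail (\<lambda>m. of_bool (odd m)) (2 * k) m" for m
    using psum_alt_sign[of 1 "2 * k" m]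
    by (auto simp: alt_tail_def min_def Suc_le_eq odd_pos)
qed (rule assms(1))

lemma alt_log_gradient_Cfun:
  assumes "odd n" "\<forall>i\<in>{1..n}. x i \<noteq> 0"
  shows "alt_log_gradient n (Cfun n) x (\<lambda>m. of_bool (odd m)) n"
proof (rule alt_log_gradientI)
  show "x i * pd (Cfun n) i x = Cfun n x * alt_sign 1 n i" for i
    using log_pd_alt_ratio[of 1 n x i] assms unfolding Cfun_eq_alt_ratio[OF assms(1)]
    by (simp add: numeral_2_eq_2)
  show "psum (alt_sign 1 n) m = alt_tail (\<lambda>m. of_bool (odd m)) n m" if "m \<le> n" for m
    using psum_alt_sign[of 1 n m] that
    by (auto simp: alt_tail_def min_def Suc_le_eq odd_pos)
qed simp

lemma alt_log_gradient_Hfun: "alt_log_gradient n (Hfun n a) x (\<lambda>m. vfun a m x) n"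
proof (rule alt_log_gradientI)
  show "x i * pd (Hfun n a) i x = 1 * (a i * x i)" if "i \<in> {1..n}" for i
    using pd_eqI[OF vfun_fun_upd_has_real_derivative] that by (simp add: Hfun_def)
  show "psum (\<lambda>i. a i * x i) m = alt_tail (\<lambda>m. vfun a m x) n m" if "m \<le> n" for m
    using that by (simp add: alt_tail_def vfun_eq_psum)
qed simp

lemma alt_log_gradient_Ffun:
  assumes "1 \<le> k" "k \<le> n div 2" "\<forall>i\<in>{1..n}. x i \<noteq> 0"
  shows "alt_log_gradient n (Ffun n a k) x (\<lambda>m. vfun a m x) (if odd n then 2 * k - 1 else 2 * k)"
proof -
  define p where "p = (if odd n then 2 * k - 1 else 2 * k)"
  define L where "L y = prod y (alt_set (p + 2) n) / prod y (alt_set (p + 1) n)" for y :: "nat \<Rightarrow> real"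
  define v where "v i = of_bool (i \<in> {1..p}) * (a i * x i) - vfun a p x * alt_sign (p + 1) n i" for i
  have "p \<le> n" using assms(1,2) unfolding p_def by auto
  have "\<forall>j\<in>{p + 1..n}. x j \<noteq> 0" using assms(3) by auto
  note L_conditions = laurent_alt_set_conditions[OF this]
  have "x i * pd (Ffun n a k) i x = L x * v i" if "i \<in> {1..n}" for i
  proof -
    have "((\<lambda>t. L (x(i := t))) has_real_derivative L x * (- alt_sign (p + 1) n i) / x i) (at (x i))"
      using laurent_has_real_derivative[of "alt_set (p + 2) n" "alt_set (p + 1) n" x i] L_conditions
      unfolding L_def alt_sign_def by (auto simp: Int_commute Un_commute algebra_simps)
    from log_pd_vfun_mult[OF this] show ?thesis
      using that assms(3) Ffun_eq_vfun_mult_alt_ratio[OF assms(1) p_def]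
      unfolding v_def L_def by (simp add: algebra_simps)
  qed
  moreover have "psum v m = alt_tail (\<lambda>m. vfun a m x) p m" if "m \<le> n" for m
  proof -
    have "psum v m = vfun a (min m p) x - vfun a p x * psum (alt_sign (p + 1) n) m"
      unfolding v_def vfun_eq_psum psum_truncate[symmetric]
      by (simp add: psum_def sum_subtractf sum_distrib_left)
    then show ?thesis
      using psum_alt_sign[of "p + 1" n m] that
      by (auto simp: alt_tail_def min_def)
  qed
  ultimately show ?thesis
    unfolding p_def[symmetric] using \<open>p \<le> n\<close> by (intro alt_log_gradientI) auto
qed

lemma pbracket_Cfun_coordinate:
  assumes "odd n" "j \<in> {1..n}" "\<forall>i\<in>{1..n}. x i \<noteq> 0"
  shows "pbracket n (Cfun n) (\<lambda>y. y j) x = 0"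
proof -
  obtain c v where C: "\<forall>i\<in>{1..n}. x i * pd (Cfun n) i x = c * v i"
    and C_psum: "\<forall>m\<le>n. psum v m = alt_tail (\<lambda>m. of_bool (odd m)) n m"
    using alt_log_gradient_Cfun[OF assms(1,3)] unfolding alt_log_gradient_def by blast
  have coordinate: "\<forall>i\<in>{1..n}. x i * pd (\<lambda>y. y j) i x = x j * of_bool (i = j)"
    by (auto simp: pd_coordinate)
  have "psum (\<lambda>i. of_bool (i = j)) m = 1 * of_bool (j \<le> m)" for m
    using assms(2) by (induction m) (auto simp: le_Suc_eq)
  then have "skew_form n (psum v) (psum (\<lambda>i. of_bool (i = j)))
      = skew_form n (\<lambda>m. of_bool (odd m)) (\<lambda>m. 1 * of_bool (j \<le> m))"
    using C_psum by (intro skew_form_cong) (auto simp: alt_tail_def)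
  also have "\<dots> = 0"
    using assms(1,2) by (subst skew_form_step) auto
  finally show ?thesis
    using pbracket_eq_skew_form[OF C coordinate] by simp
qed

theorem proposition2p2:
  fixes n :: nat and a :: "nat \<Rightarrow> real"
  assumes "n \<ge> 1" and "\<exists>i\<in>{1..n}. a i \<noteq> 0"
  shows "(\<forall>k\<in>{1..n div 2}. \<forall>l\<in>{1..n div 2}. \<forall>x. (\<forall>i\<in>{1..n}. x i \<noteq> 0) \<longrightarrow>
            pbracket n (Jfun k) (Jfun l) x = 0
          \<and> pbracket n (Ffun n a k) (Ffun n a l) x = 0
          \<and> pbracket n (Ffun n a k) (Hfun n a) x = 0)
       \<and> (odd n \<longrightarrow> (\<forall>j\<in>{1..n}. \<forall>x. (\<forall>i\<in>{1..n}. x i \<noteq> 0) \<longrightarrow>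
            pbracket n (Cfun n) (\<lambda>y. y j) x = 0))"
proof (intro conjI ballI allI impI)
  fix k l and x :: "nat \<Rightarrow> real"
  assume k: "k \<in> {1..n div 2}" and l: "l \<in> {1..n div 2}" and x: "\<forall>i\<in>{1..n}. x i \<noteq> 0"
  have J: "alt_log_gradient n (Jfun i) x (\<lambda>m. of_bool (odd m)) (2 * i)" if "i \<in> {1..n div 2}" for i
    using that by (intro alt_log_gradient_Jfun x) auto
  have F: "alt_log_gradient n (Ffun n a i) x (\<lambda>m. vfun a m x) (if odd n then 2 * i - 1 else 2 * i)"
    if "i \<in> {1..n div 2}" for i
    using that by (intro alt_log_gradient_Ffun x) auto
  show "pbracket n (Jfun k) (Jfun l) x = 0"
    by (rule pbracket_eq_0_if_alt_log_gradient[OF J[OF k] J[OF l]]) simp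
  show "pbracket n (Ffun n a k) (Ffun n a l) x = 0"
    by (rule pbracket_eq_0_if_alt_log_gradient[OF F[OF k] F[OF l]]) (use k l in auto)
  show "pbracket n (Ffun n a k) (Hfun n a) x = 0"
    by (rule pbracket_eq_0_if_alt_log_gradient[OF F[OF k] alt_log_gradient_Hfun]) (use k in auto)
qed (rule pbracket_Cfun_coordinate)

end
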